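(* Let $p$ be a prime and $n, k$ positive integers, $d = \gcd(n,k)$. Let $L(X) = \sum_{i=0}^t \alpha_i X^{p^i}$, $\alpha_i \in \mathbb{F}_p$, be a $p$-linearized polynomial without multiple roots, and let $L'$ be a $p$-linearized polynomial over $\mathbb{F}_p$ with $S_k^{2k}(X) = X - X^{p^k} = L \circ L'(X)$. Let $l'$ be the conventional $p$-associate of $L'$, let $w = (l', t_d^k)$, $u = l'/w$, $v = t_d^k/w$, and let $U, V$ be the linearized $p$-associates of $u, v$. Then $$U \circ L = S_d^{2d} \circ V.$$
   Context: For positive integers $l \mid k$ define $T_l^k(X) = \sum_{i=0}^{k/l - 1} X^{p^{li}}$ and $S_l^k(X) = \sum_{i=0}^{k/l-1} (-1)^i X^{p^{li}}$. For $l(X) = \sum \alpha_i X^i \in \mathbb{F}_p[X]$, its linearized $p$-associate is $\sum \alpha_i X^{p^i}$, and conversely $l$ is the conventional $p$-associate of that linearized polynomial; $t_d^k(X) = \sum_{i=0}^{k/d-1} X^{di}$ is the conventional $p$-associate of $T_d^k$. $(f,g)$ denotes the monic gcd in $\mathbb{F}_p[X]$. $\circ$ denotes composition. *)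

theory Defs
  imports "HOL-Computational_Algebra.Computational_Algebra" "HOL-Library.Cardinality"
begin

definition lin_assoc :: "nat \<Rightarrow> 'a::comm_ring_1 poly \<Rightarrow> 'a poly" where
  "lin_assoc p l = (\<Sum>i\<le>degree l. monom (coeff l i) (p ^ i))"

definition is_linearized :: "nat \<Rightarrow> 'a::comm_ring_1 poly \<Rightarrow> bool" where
  "is_linearized p L \<longleftrightarrow> (\<forall>j. coeff L j \<noteq> 0 \<longrightarrow> (\<exists>i. j = p ^ i))"

definition conv_assoc :: "nat \<Rightarrow> 'a::comm_ring_1 poly \<Rightarrow> 'a poly" where
  "conv_assoc p L = (\<Sum>i\<le>degree L. monom (coeff L (p ^ i)) i)"

definition T_lin :: "nat \<Rightarrow> nat \<Rightarrow> nat \<Rightarrow> 'a::comm_ring_1 poly" where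
  "T_lin p l k = (\<Sum>i<k div l. monom 1 (p ^ (l * i)))"

definition S_lin :: "nat \<Rightarrow> nat \<Rightarrow> nat \<Rightarrow> 'a::comm_ring_1 poly" where
  "S_lin p l k = (\<Sum>i<k div l. monom ((-1) ^ i) (p ^ (l * i)))"

definition t_conv :: "nat \<Rightarrow> nat \<Rightarrow> 'a::comm_ring_1 poly" where
  "t_conv d k = (\<Sum>i<k div d. monom 1 (d * i))"

text \<open>No multiple roots (in an algebraic closure): coprime with the formal derivative.\<close>
definition no_multiple_roots :: "'a::field poly \<Rightarrow> bool" where
  "no_multiple_roots f \<longleftrightarrow> f \<noteq> 0 \<and> coprime f (pderiv f)"

end

theory Submission
  imports Defs
begin

text \<open>
  Since the Frobenius map fixes \<open>\<bbbF>\<^sub>p\<close>, taking linearized \<open>p\<close>-associates is an injective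
  ring homomorphism from \<open>(\<bbbF>\<^sub>p[X], +, \<times>)\<close> to \<open>(\<bbbF>\<^sub>p[X], +, \<circ>)\<close>.  Hence the hypothesis
  \<open>X - X\<^bsup>p^k\<^esup> = L \<circ> L'\<close> becomes \<open>l l' = 1 - X\<^sup>k = (1 - X\<^sup>d) t\<^sub>d\<^sup>k\<close>, with \<open>l\<close> the
  conventional associate of \<open>L\<close>.  Cancelling \<open>w = (l', t\<^sub>d\<^sup>k)\<close> gives \<open>u l = (1 - X\<^sup>d) v\<close>,
  whose image under the homomorphism is \<open>U \<circ> L = S\<^sub>d\<^bsup>2d\<^esup> \<circ> V\<close>.
\<close>

lemma of_nat_card_UNIV_eq_0:
  assumes "finite (UNIV :: 'a::ring_1 set)"
  shows "of_nat CARD('a) = (0::'a)"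
proof -
  have "(\<Sum>x\<in>(UNIV::'a set). x + 1) = (\<Sum>x\<in>UNIV. x)"
    by (rule sum.reindex_bij_witness[of _ "\<lambda>y. y - 1" "\<lambda>y. y + 1"]) auto
  then show ?thesis
    by (simp add: sum.distrib)
qed

context
  fixes p :: nat
  assumes card_eq: "CARD('a::field) = p" and prime: "prime p"
begin

lemma finite_UNIV_card_prime: "finite (UNIV :: 'a set)"
  using card_eq prime by (simp add: card_ge_0_finite prime_gt_0_nat)

lemma CHAR_eq_card_prime: "CHAR('a) = p"
proof (rule primes_dvd_imp_eq)
  show "CHAR('a) dvd p"
    using card_eq of_nat_card_UNIV_eq_0[OF finite_UNIV_card_prime]
    by (simp add: of_nat_eq_0_iff_char_dvd)
  show "prime CHAR('a)"
    using prime_CHAR_semidom finite_imp_CHAR_pos[OF finite_UNIV_card_prime] by blast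
qed (fact prime)

lemma image_of_nat_lessThan_card_prime: "of_nat ` {..<p} = (UNIV :: 'a set)"
proof (rule card_subset_eq)
  have "inj_on (of_nat :: nat \<Rightarrow> 'a) {..<p}"
  proof (rule inj_onI)
    fix a b :: nat
    assume "a \<in> {..<p}" "b \<in> {..<p}" "of_nat a = (of_nat b :: 'a)"
    moreover have "\<not> p dvd j - i" if "i < j" "j < p" for i j
      using that by (auto dest: dvd_imp_le)
    ultimately show "a = b"
      using of_nat_eq_iff_char_dvd[of a b, where 'a='a] of_nat_eq_iff_char_dvd[of b a, where 'a='a]
      by (cases a b rule: linorder_cases) (auto simp: CHAR_eq_card_prime)
  qed
  then show "card (of_nat ` {..<p} :: 'a set) = card (UNIV :: 'a set)"
    by (simp add: card_image card_eq)
qed (simp_all add: finite_UNIV_card_prime)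

lemma power_card_prime_eq_self: "(x::'a) ^ p = x"
proof -
  have "(of_nat m :: 'a) ^ p = of_nat m" for m
  proof (induction m)
    case (Suc m)
    have "(of_nat (Suc m) :: 'a) ^ p = (of_nat m + 1) ^ p"
      by (simp add: add.commute)
    also have "\<dots> = of_nat m ^ p + 1 ^ p"
      by (rule freshmans_dream) (use prime in \<open>simp_all add: CHAR_eq_card_prime\<close>)
    finally show ?case
      by (simp add: Suc)
  qed (use prime prime_gt_0_nat in simp)
  moreover obtain m where "x = of_nat m"
    using image_of_nat_lessThan_card_prime by (metis UNIV_I imageE)
  ultimately show ?thesis
    by simp
qed

end

lemma lin_assoc_eq_sum_atMost:
  assumes "degree a \<le> N"
  shows "lin_assoc p a = (\<Sum>i\<le>N. monom (coeff a i) (p ^ i))"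
  unfolding lin_assoc_def
  by (rule sum.mono_neutral_left) (use assms in \<open>auto simp: coeff_eq_0\<close>)

lemma lin_assoc_add: "lin_assoc p (a + b) = lin_assoc p a + lin_assoc p b"
proof -
  let ?N = "max (degree a) (degree b)"
  have "degree (a + b) \<le> ?N"
    by (simp add: degree_add_le)
  then show ?thesis
    by (simp add: lin_assoc_eq_sum_atMost[of _ ?N] lin_assoc_eq_sum_atMost[of a ?N]
        lin_assoc_eq_sum_atMost[of b ?N] add_monom flip: sum.distrib)
qed

lemma lin_assoc_smult: "lin_assoc p (smult c a) = smult c (lin_assoc p a)"
proof -
  have "lin_assoc p (smult c a) = (\<Sum>i\<le>degree a. monom (coeff (smult c a) i) (p ^ i))"
    by (rule lin_assoc_eq_sum_atMost) (simp add: degree_smult_le)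
  then show ?thesis
    by (simp add: lin_assoc_def smult_monom sum_distrib_left[of "[:c:]", simplified])
qed

lemma lin_assoc_sum: "lin_assoc p (sum f A) = (\<Sum>i\<in>A. lin_assoc p (f i))"
  by (induction A rule: infinite_finite_induct) (simp_all add: lin_assoc_add lin_assoc_def[of p 0])

lemma lin_assoc_monom: "lin_assoc p (monom c i) = monom c (p ^ i)"
proof -
  have "lin_assoc p (monom c i) = (\<Sum>j\<le>i. monom (coeff (monom c i) j) (p ^ j))"
    by (rule lin_assoc_eq_sum_atMost) (simp add: degree_monom_le)
  also have "\<dots> = (\<Sum>j\<in>{i}. monom (coeff (monom c i) j) (p ^ j))"
    by (rule sum.mono_neutral_right) auto
  finally show ?thesis
    by simp
qed

lemma coeff_lin_assoc_power:
  assumes "p > 1"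
  shows "coeff (lin_assoc p a) (p ^ i) = coeff a i"
proof -
  let ?N = "max (degree a) i"
  have "coeff (lin_assoc p a) (p ^ i) = (\<Sum>j\<le>?N. coeff (monom (coeff a j) (p ^ j)) (p ^ i))"
    by (simp add: lin_assoc_eq_sum_atMost[of a ?N] coeff_sum)
  also have "\<dots> = (\<Sum>j\<in>{i}. coeff (monom (coeff a j) (p ^ j)) (p ^ i))"
    by (rule sum.mono_neutral_right) (use assms in \<open>auto simp: coeff_monom power_inject_exp\<close>)
  finally show ?thesis
    by simp
qed

lemma coeff_lin_assoc_not_power:
  assumes "\<forall>i. j \<noteq> p ^ i"
  shows "coeff (lin_assoc p a) j = 0"
  unfolding lin_assoc_def using assms by (auto simp: coeff_sum coeff_monom intro!: sum.neutral)

lemma lin_assoc_inject: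
  assumes "p > 1"
  shows "lin_assoc p a = lin_assoc p b \<longleftrightarrow> a = b"
  by (metis assms coeff_lin_assoc_power poly_eqI)

lemma pcompose_monom: "pcompose (monom c m) q = smult c (q ^ m)"
  by (induction m) (simp_all add: monom_0 monom_Suc pcompose_pCons)

context
  fixes p :: nat
  assumes CHAR_eq: "CHAR('a::comm_ring_1) = p" and prime: "prime p"
    and frobenius_id: "\<And>c::'a. c ^ p = c"
begin

lemma power_lin_assoc: "lin_assoc p (a::'a poly) ^ p = lin_assoc p (pCons 0 a)"
proof -
  have "lin_assoc p a ^ p = (\<Sum>i\<le>degree a. monom (coeff a i) (p ^ i) ^ p)"
    unfolding lin_assoc_def by (rule freshmans_dream_sum) (use CHAR_eq prime in auto)
  also have "\<dots> = (\<Sum>i\<le>Suc (degree a). monom (coeff (pCons 0 a) i) (p ^ i))"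
    by (subst sum.atMost_Suc_shift) (simp add: monom_power frobenius_id mult.commute)
  also have "\<dots> = lin_assoc p (pCons 0 a)"
    by (rule lin_assoc_eq_sum_atMost[symmetric]) (simp add: degree_pCons_le)
  finally show ?thesis .
qed

lemma lin_assoc_monom_mult: "lin_assoc p (monom 1 i * a) = lin_assoc p (a::'a poly) ^ (p ^ i)"
proof (induction i)
  case (Suc i)
  have "lin_assoc p (monom 1 (Suc i) * a) = lin_assoc p (monom 1 i * a) ^ p"
    by (simp add: monom_Suc power_lin_assoc)
  also have "\<dots> = lin_assoc p a ^ (p ^ Suc i)"
    by (simp add: Suc mult.commute[of "p ^ i"] flip: power_mult)
  finally show ?case .
qed (simp add: monom_0 one_pCons[symmetric])

lemma lin_assoc_mult: "lin_assoc p ((a::'a poly) * b) = pcompose (lin_assoc p a) (lin_assoc p b)"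
proof -
  have monom_mult: "lin_assoc p (monom c i * b) = pcompose (lin_assoc p (monom c i)) (lin_assoc p b)" for c i
    by (simp add: smult_monom_mult[of c 1, simplified, symmetric] lin_assoc_smult
        lin_assoc_monom_mult lin_assoc_monom pcompose_monom)
  have "lin_assoc p (a * b) = (\<Sum>i\<le>degree a. lin_assoc p (monom (coeff a i) i * b))"
    by (subst (1) poly_as_sum_of_monoms[symmetric]) (simp add: sum_distrib_right lin_assoc_sum)
  also have "\<dots> = pcompose (lin_assoc p a) (lin_assoc p b)"
    by (subst (3) poly_as_sum_of_monoms[symmetric]) (simp add: monom_mult lin_assoc_sum pcompose_sum)
  finally show ?thesis .
qed

end

lemma coeff_conv_assoc: "coeff (conv_assoc p L) i = (if i \<le> degree L then coeff L (p ^ i) else 0)"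
  unfolding conv_assoc_def by (simp add: coeff_sum coeff_monom)

lemma lin_assoc_conv_assoc:
  assumes "p > 1" "is_linearized p L"
  shows "lin_assoc p (conv_assoc p L) = L"
proof (rule poly_eqI)
  fix j
  show "coeff (lin_assoc p (conv_assoc p L)) j = coeff L j"
  proof (cases "\<exists>i. j = p ^ i")
    case True
    then obtain i where j: "j = p ^ i"
      by blast
    have "i < p ^ i"
      using assms(1) less_exp[of i] power_mono[of 2 p i] by linarith
    then have "i > degree L \<Longrightarrow> coeff L (p ^ i) = 0"
      by (intro coeff_eq_0) simp
    then show ?thesis
      using j assms(1) by (auto simp: coeff_lin_assoc_power coeff_conv_assoc)
  next
    case False
    then show ?thesis
      using assms(2) coeff_lin_assoc_not_power[of j p] unfolding is_linearized_def by metis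
  qed
qed

lemma S_lin_double_eq_lin_assoc:
  assumes "k > 0"
  shows "S_lin p k (2 * k) = lin_assoc p (1 - monom 1 k)"
proof -
  have "1 - monom (1::'a) k = monom 1 0 + monom (-1) k"
    by (simp add: monom_0 one_pCons minus_monom[symmetric])
  then have "lin_assoc p (1 - monom (1::'a) k) = monom 1 (p ^ 0) + monom (-1) (p ^ k)"
    by (simp only: lin_assoc_add lin_assoc_monom)
  then show ?thesis
    using assms by (simp add: S_lin_def numeral_2_eq_2 lessThan_Suc add.commute)
qed

lemma one_minus_monom_mult_t_conv:
  assumes "d > 0" "d dvd k"
  shows "(1 - monom 1 d) * t_conv d k = (1 - monom (1::'a::comm_ring_1) k)"
proof -
  have "t_conv d k = (\<Sum>i<k div d. monom (1::'a) d ^ i)"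
    unfolding t_conv_def by (simp add: monom_power mult.commute)
  then have "(1 - monom 1 d) * t_conv d k = 1 - monom (1::'a) d ^ (k div d)"
    by (simp add: one_diff_power_eq)
  also have "\<dots> = 1 - monom 1 k"
    using assms by (simp add: monom_power)
  finally show ?thesis .
qed

lemma mult_div_common_factor_eq:
  fixes a b c e w :: "'a::algebraic_semidom"
  assumes "a * b = c * e" "w dvd b" "w dvd e" "w \<noteq> 0"
  shows "(b div w) * a = c * (e div w)"
proof -
  have "(b div w) * a * w = a * (b div w * w)"
    by (simp only: ac_simps)
  also have "\<dots> = a * b"
    using assms(2) by simp
  also have "\<dots> = c * (e div w * w)"
    using assms(1,3) by simp
  also have "\<dots> = c * (e div w) * w"
    by (simp only: ac_simps)
  finally show ?thesis
    using assms(4) by simp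
qed

theorem proposition3:
  fixes p n k d :: nat
    and L L' :: "'a::field_gcd poly"
  assumes "prime p" and "CARD('a) = p"
    and "n > 0" and "k > 0" and "d = gcd n k"
    and "is_linearized p L" and "no_multiple_roots L"
    and "is_linearized p L'"
    and "S_lin p k (2 * k) = pcompose L L'"
  shows "let l' = conv_assoc p L'; w = gcd l' (t_conv d k);
             u = l' div w; v = t_conv d k div w
         in pcompose (lin_assoc p u) L = pcompose (S_lin p d (2 * d)) (lin_assoc p v)"
proof -
  have p_gt_1: "p > 1"
    using assms(1) prime_gt_1_nat by blast
  have d: "d > 0" "d dvd k"
    using assms(4,5) by auto
  note lin_assoc_mult = lin_assoc_mult[OF CHAR_eq_card_prime[OF assms(2,1)] assms(1)
      power_card_prime_eq_self[OF assms(2,1)]]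
  define l l' t where "l = conv_assoc p L" and "l' = conv_assoc p L'" and "t = (t_conv d k :: 'a poly)"
  define w where "w = gcd l' t"
  have L: "lin_assoc p l = L" "lin_assoc p l' = L'"
    unfolding l_def l'_def using lin_assoc_conv_assoc p_gt_1 assms(6,8) by blast+
  have "lin_assoc p (l * l') = lin_assoc p (1 - monom 1 k)"
    using assms(9) by (simp add: lin_assoc_mult L S_lin_double_eq_lin_assoc[OF assms(4)])
  then have "l * l' = (1 - monom 1 d) * t"
    unfolding t_def by (simp add: lin_assoc_inject[OF p_gt_1] one_minus_monom_mult_t_conv[OF d])
  moreover have "w \<noteq> 0"
    using assms(4) one_minus_monom_mult_t_conv[OF d, where 'a='a]
    by (auto simp: w_def t_def dest: arg_cong[where f="\<lambda>q. coeff q 0"])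
  ultimately have "(l' div w) * l = (1 - monom 1 d) * (t div w)"
    by (intro mult_div_common_factor_eq) (auto simp: w_def)
  then have "lin_assoc p (l' div w * l) = lin_assoc p ((1 - monom 1 d) * (t div w))"
    by simp
  then show ?thesis
    unfolding Let_def l'_def t_def w_def
    by (simp add: lin_assoc_mult L(1) S_lin_double_eq_lin_assoc[OF d(1)])
qed

end
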